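(* Let $G$ be a connected $K_4$-free graph whose diamonds are mutually edge-disjoint. Then $$|E(G)|-|V(G)|-2t(G)+d(G)+1 \le p(G) \le |E(G)|-|V(G)|-t(G)+1.$$ Moreover, the first inequality is an equality if $G^-$ is connected, and the second inequality is an equality if $G^-$ has exactly $2t(G)-d(G)+1$ connected components.
   Context: All graphs are finite and simple. For an acyclic digraph $D$, the phylogeny graph $P(D)$ is the graph on $V(D)$ in which distinct vertices $u,v$ are adjacent if and only if $(u,v)\in A(D)$, or $(v,u)\in A(D)$, or there is a vertex $w$ with $(u,w),(v,w)\in A(D)$. A phylogeny digraph for a graph $G$ is an acyclic digraph $D$ such that $G$ is an induced subgraph of $P(D)$ and $D$ has no arc from a vertex of $V(D)\setminus V(G)$ to a vertex of $V(G)$. The phylogeny number $p(G)$ is the minimum of $|V(D)\setminus V(G)|$ over all phylogeny digraphs $D$ for $G$. A diamond is a subgraph isomorphic to $K_4$ minus one edge (two triangles sharing an edge). $t(G)$ is the number of triangles of $G$ and $d(G)$ the number of diamonds of $G$. A triangle edge is an edge lying on some triangle; $G^-$ is the graph obtained from $G$ by deleting all triangle edges (keeping all vertices). *)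

theory Defs
  imports Main
begin

definition simple_graph :: "'a set \<Rightarrow> 'a set set \<Rightarrow> bool" where
  "simple_graph V E \<longleftrightarrow> finite V \<and>
     (\<forall>e\<in>E. \<exists>u v. e = {u, v} \<and> u \<noteq> v \<and> u \<in> V \<and> v \<in> V)"

definition edge_rel :: "'a set set \<Rightarrow> ('a \<times> 'a) set" where
  "edge_rel E = {(u, v). {u, v} \<in> E \<and> u \<noteq> v}"

definition connected_graph :: "'a set \<Rightarrow> 'a set set \<Rightarrow> bool" where
  "connected_graph V E \<longleftrightarrow> V \<noteq> {} \<and> (\<forall>u\<in>V. \<forall>v\<in>V. (u, v) \<in> (edge_rel E)\<^sup>*)"

definition num_components :: "'a set \<Rightarrow> 'a set set \<Rightarrow> nat" where
  "num_components V E = card ((\<lambda>v. {u \<in> V. (v, u) \<in> (edge_rel E)\<^sup>*}) ` V)"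

definition triangles :: "'a set \<Rightarrow> 'a set set \<Rightarrow> 'a set set" where
  "triangles V E = {T. \<exists>a b c. T = {a, b, c} \<and> a \<in> V \<and> b \<in> V \<and> c \<in> V \<and>
      a \<noteq> b \<and> a \<noteq> c \<and> b \<noteq> c \<and> {a, b} \<in> E \<and> {a, c} \<in> E \<and> {b, c} \<in> E}"

definition num_triangles :: "'a set \<Rightarrow> 'a set set \<Rightarrow> nat" where
  "num_triangles V E = card (triangles V E)"

text \<open>A diamond (subgraph isomorphic to K4 minus an edge) is identified with its edge set:
  two triangles abc and abx sharing the edge ab.\<close>
definition diamonds :: "'a set \<Rightarrow> 'a set set \<Rightarrow> 'a set set set" where
  "diamonds V E = {D. \<exists>a b c x. a \<in> V \<and> b \<in> V \<and> c \<in> V \<and> x \<in> V \<and>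
      distinct [a, b, c, x] \<and>
      D = {{a, b}, {a, c}, {b, c}, {a, x}, {b, x}} \<and> D \<subseteq> E}"

definition num_diamonds :: "'a set \<Rightarrow> 'a set set \<Rightarrow> nat" where
  "num_diamonds V E = card (diamonds V E)"

definition K4_free :: "'a set \<Rightarrow> 'a set set \<Rightarrow> bool" where
  "K4_free V E \<longleftrightarrow> \<not> (\<exists>a b c x. a \<in> V \<and> b \<in> V \<and> c \<in> V \<and> x \<in> V \<and>
      distinct [a, b, c, x] \<and>
      {{a, b}, {a, c}, {b, c}, {a, x}, {b, x}, {c, x}} \<subseteq> E)"

definition triangle_edges :: "'a set \<Rightarrow> 'a set set \<Rightarrow> 'a set set" where
  "triangle_edges V E = {e \<in> E. \<exists>T \<in> triangles V E. e \<subseteq> T}"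

text \<open>G minus its triangle edges (same vertex set).\<close>
definition minus_edges :: "'a set \<Rightarrow> 'a set set \<Rightarrow> 'a set set" where
  "minus_edges V E = E - triangle_edges V E"

definition phylo_adj :: "('b \<times> 'b) set \<Rightarrow> 'b \<Rightarrow> 'b \<Rightarrow> bool" where
  "phylo_adj A u v \<longleftrightarrow> u \<noteq> v \<and>
     ((u, v) \<in> A \<or> (v, u) \<in> A \<or> (\<exists>w. (u, w) \<in> A \<and> (v, w) \<in> A))"

text \<open>A phylogeny digraph for G = (V, E): vertices of G are embedded via Inl, the digraph
  has vertex set W (finite) containing them, arcs inside W, is acyclic, has no arc from a
  new vertex into V(G), and G is the induced subgraph of P(D) on V(G).\<close>
definition phylogeny_digraph ::
  "'a set \<Rightarrow> 'a set set \<Rightarrow> ('a + nat) set \<Rightarrow> (('a + nat) \<times> ('a + nat)) set \<Rightarrow> bool" where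
  "phylogeny_digraph V E W A \<longleftrightarrow> finite W \<and> Inl ` V \<subseteq> W \<and> A \<subseteq> W \<times> W \<and> acyclic A \<and>
     (\<forall>x y. (x, y) \<in> A \<longrightarrow> x \<notin> Inl ` V \<longrightarrow> y \<notin> Inl ` V) \<and>
     (\<forall>u\<in>V. \<forall>v\<in>V. u \<noteq> v \<longrightarrow> ({u, v} \<in> E \<longleftrightarrow> phylo_adj A (Inl u) (Inl v)))"

definition phylogeny_number :: "'a set \<Rightarrow> 'a set set \<Rightarrow> nat" where
  "phylogeny_number V E = (LEAST k. \<exists>W A. phylogeny_digraph V E W A \<and> card (W - Inl ` V) = k)"

end

theory Submission
  imports Defs
begin

text \<open>
  In a K4-free graph whose diamonds are edge-disjoint, an edge lies on at most two triangles,
  the edges on two triangles are exactly the diagonals of the diamonds, and no triangle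
  contains two diagonals. So every triangle has an edge on no other triangle, and double
  counting gives |E| + d = |E(G^-)| + 3t; both bounds become bounds on p + n in terms of
  |E(G^-)|, t and d.

  In a phylogeny digraph, every vertex together with its in-neighbours in G is a clique of G,
  hence an edge or a triangle, and these cliques cover E. They must include every edge of
  G^- and, for every triangle, the triangle itself or its private edge; but at most p of them
  belong to new vertices and at most n - 1 to vertices of G, because a source has no
  in-neighbours. Hence p + n \<ge> |E(G^-)| + t + 1. A clique at a vertex v of G that is an edge
  of G^- enters v along G^-, and every component of G^- has a vertex not entered in this
  way; hence also p + n \<ge> |E(G^-)| + c(G^-).

  Conversely, given a ranking of the vertices, let every vertex that is the last vertex of a
  triangle or of an edge of G^- receive arcs from the other vertices of one such clique, and
  give every remaining triangle and edge of G^- a new common out-neighbour. A search order of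
  G^- (when it is connected) leaves no vertex but the root without a clique. A search order
  of G that prefers vertices completing a triangle with visited vertices leaves at most t - d
  of them: each such vertex is the middle vertex of a triangle of its own, two of these
  triangles never share an edge, and so each diamond keeps a triangle that is nobody's middle
  triangle.
\<close>

section \<open>Triangles and diamonds\<close>

locale finite_simple_graph =
  fixes V :: "'a set" and E :: "'a set set"
  assumes simple: "simple_graph V E"
begin

abbreviation "Tri \<equiv> triangles V E"
abbreviation "TE \<equiv> triangle_edges V E"
abbreviation "Eminus \<equiv> minus_edges V E"

lemma finite_V: "finite V"
  using simple by (simp add: simple_graph_def)

lemma edgeE:
  assumes "e \<in> E"
  obtains u v where "e = {u, v}" "u \<noteq> v" "u \<in> V" "v \<in> V"
  using simple assms by (auto simp: simple_graph_def)

lemma edges_Pow: "E \<subseteq> Pow V"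
  by (auto elim: edgeE)

lemma finite_E: "finite E"
  using edges_Pow finite_V by (simp add: finite_subset)

lemma card_edge: "e \<in> E \<Longrightarrow> card e = 2"
  by (erule edgeE) simp

lemma edge_distinct: "{u, v} \<in> E \<Longrightarrow> u \<noteq> v"
  using card_edge by fastforce

lemma edge_vertices: "{u, v} \<in> E \<Longrightarrow> u \<in> V \<and> v \<in> V"
  using edges_Pow by auto

lemma Eminus_subset: "Eminus \<subseteq> E"
  by (auto simp: minus_edges_def)

lemma triangle_edges_subset: "TE \<subseteq> E"
  by (auto simp: triangle_edges_def)

lemma triangleI: "{a, b} \<in> E \<Longrightarrow> {a, c} \<in> E \<Longrightarrow> {b, c} \<in> E \<Longrightarrow> {a, b, c} \<in> Tri"
  unfolding triangles_def by (blast dest: edge_vertices edge_distinct)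

lemma triangleE:
  assumes "T \<in> Tri"
  obtains a b c where "T = {a, b, c}" "{a, b} \<in> E" "{a, c} \<in> E" "{b, c} \<in> E"
    "a \<noteq> b" "a \<noteq> c" "b \<noteq> c" "a \<in> V" "b \<in> V" "c \<in> V"
  using assms unfolding triangles_def by auto

lemma triangle_subset: "T \<in> Tri \<Longrightarrow> T \<subseteq> V"
  by (auto elim!: triangleE)

lemma card_triangle: "T \<in> Tri \<Longrightarrow> card T = 3"
  by (auto elim!: triangleE)

lemma finite_triangles: "finite Tri"
  using finite_V by (auto intro: finite_subset[of _ "Pow V"] dest: triangle_subset)

lemma triangle_edge: "T \<in> Tri \<Longrightarrow> x \<in> T \<Longrightarrow> y \<in> T \<Longrightarrow> x \<noteq> y \<Longrightarrow> {x, y} \<in> E"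
  by (auto elim!: triangleE simp: insert_commute)

lemma triangle_third_vertexE:
  assumes "T \<in> Tri" "a \<in> T" "b \<in> T" "a \<noteq> b"
  obtains x where "T = {a, b, x}" "x \<noteq> a" "x \<noteq> b"
  using assms by (elim triangleE) (auto simp: insert_commute)

lemma triangle_vertices_distinct: "{a, b, c} \<in> Tri \<Longrightarrow> a \<noteq> b \<and> a \<noteq> c \<and> b \<noteq> c"
  using card_triangle[of "{a, b, c}"] by (auto simp: card_insert_if split: if_splits)

lemma triangle_edge_disjoint: "T \<in> Tri \<Longrightarrow> T \<notin> E"
  using card_triangle card_edge by fastforce

lemma diamondI:
  assumes "{a, b} \<in> E" "{a, c} \<in> E" "{b, c} \<in> E" "{a, x} \<in> E" "{b, x} \<in> E" "c \<noteq> x"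
  shows "{{a, b}, {a, c}, {b, c}, {a, x}, {b, x}} \<in> diamonds V E"
proof -
  have "a \<in> V" "b \<in> V" "c \<in> V" "x \<in> V" "distinct [a, b, c, x]"
    using assms by (auto dest: edge_vertices edge_distinct)
  then show ?thesis
    unfolding diamonds_def using assms
    by (intro CollectI exI[of _ a] exI[of _ b] exI[of _ c] exI[of _ x]) simp
qed

lemma edge_subset_edge_eq: "e \<in> E \<Longrightarrow> e' \<in> E \<Longrightarrow> e \<subseteq> e' \<Longrightarrow> e = e'"
  by (metis card_edge card_subset_eq card.infinite zero_neq_numeral)

definition clique :: "'a set \<Rightarrow> bool" where
  "clique S \<longleftrightarrow> S \<subseteq> V \<and> (\<forall>x\<in>S. \<forall>y\<in>S. x \<noteq> y \<longrightarrow> {x, y} \<in> E)"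

lemma clique_triangle: "T \<in> Tri \<Longrightarrow> clique T"
  unfolding clique_def using triangle_subset triangle_edge by auto

lemma clique_edge:
  assumes "e \<in> E"
  shows "clique e"
proof -
  obtain u v where "e = {u, v}" "u \<in> V" "v \<in> V"
    using assms by (rule edgeE)
  then show ?thesis
    using assms unfolding clique_def by (auto simp: insert_commute)
qed

lemma clique_singleton: "v \<in> V \<Longrightarrow> clique {v}"
  unfolding clique_def by auto

end

locale diamond_disjoint_graph = finite_simple_graph +
  assumes K4_free: "K4_free V E"
    and diamonds_disjoint: "\<forall>D1\<in>diamonds V E. \<forall>D2\<in>diamonds V E. D1 \<noteq> D2 \<longrightarrow> D1 \<inter> D2 = {}"
begin

lemma diamond_eq:
  assumes "D1 \<in> diamonds V E" "D2 \<in> diamonds V E" "e \<in> D1" "e \<in> D2"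
  shows "D1 = D2"
  using diamonds_disjoint assms by blast

lemma no_K4:
  assumes "{a, b} \<in> E" "{a, c} \<in> E" "{b, c} \<in> E" "{a, x} \<in> E" "{b, x} \<in> E" "{c, x} \<in> E"
  shows False
proof -
  have "a \<in> V" "b \<in> V" "c \<in> V" "x \<in> V" "distinct [a, b, c, x]"
    using assms by (auto dest: edge_vertices edge_distinct)
  then show False
    using K4_free assms unfolding K4_free_def by blast
qed


definition diagonals :: "'a set set" where
  "diagonals = {e \<in> E. \<exists>T1\<in>Tri. \<exists>T2\<in>Tri. T1 \<noteq> T2 \<and> e \<subseteq> T1 \<and> e \<subseteq> T2}"

lemma diagonals_subset: "diagonals \<subseteq> TE"
  unfolding diagonals_def triangle_edges_def by auto

lemma diagonal_other_triangleE:
  assumes "e \<in> diagonals" "T \<in> Tri"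
  obtains T' where "T' \<in> Tri" "e \<subseteq> T'" "T' \<noteq> T"
  using assms unfolding diagonals_def by blast

lemma non_diagonal_triangle_unique:
  "e \<in> E \<Longrightarrow> e \<notin> diagonals \<Longrightarrow> T1 \<in> Tri \<Longrightarrow> T2 \<in> Tri \<Longrightarrow> e \<subseteq> T1 \<Longrightarrow> e \<subseteq> T2 \<Longrightarrow> T1 = T2"
  unfolding diagonals_def by blast

text \<open>The two diamonds on the diagonals ab and ac of a triangle abc would share the edge ab,
  hence coincide, which forces a K4.\<close>

lemma diagonals_not_adjacent:
  assumes T: "{a, b, c} \<in> Tri" and ab: "{a, b} \<in> diagonals" and ac: "{a, c} \<in> diagonals"
  shows False
proof -
  have d: "a \<noteq> b" "a \<noteq> c" "b \<noteq> c"
    using triangle_vertices_distinct[OF T] by auto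
  have e: "{a, b} \<in> E" "{a, c} \<in> E" "{b, c} \<in> E"
    using triangle_edge[OF T] d by auto
  obtain T1 where T1: "T1 \<in> Tri" "{a, b} \<subseteq> T1" "T1 \<noteq> {a, b, c}"
    using diagonal_other_triangleE[OF ab T] .
  then obtain x where x: "T1 = {a, b, x}"
    using d(1) by (meson insert_subset triangle_third_vertexE)
  have xc: "x \<noteq> c" and xb: "x \<noteq> b"
    using x T1 triangle_vertices_distinct by auto
  obtain T2 where T2: "T2 \<in> Tri" "{a, c} \<subseteq> T2" "T2 \<noteq> {a, b, c}"
    using diagonal_other_triangleE[OF ac T] .
  then obtain y where y: "T2 = {a, c, y}"
    using d(2) by (meson insert_subset triangle_third_vertexE)
  have yb: "y \<noteq> b"
    using y T2(3) by (auto simp: insert_commute)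
  have ex: "{a, x} \<in> E" "{b, x} \<in> E"
    using triangle_edge[OF T1(1)] x T1(1) by (auto dest: triangle_vertices_distinct)
  have ey: "{a, y} \<in> E" "{c, y} \<in> E"
    using triangle_edge[OF T2(1)] y T2(1) by (auto dest: triangle_vertices_distinct)
  define D1 where "D1 = {{a, b}, {a, c}, {b, c}, {a, x}, {b, x}}"
  define D2 where "D2 = {{a, c}, {a, b}, {c, b}, {a, y}, {c, y}}"
  have "D1 \<in> diamonds V E" "D2 \<in> diamonds V E"
    unfolding D1_def D2_def
    using diamondI[OF e ex xc[symmetric]] diamondI[OF e(2,1) _ ey yb[symmetric]] e(3)
    by (simp_all add: insert_commute)
  moreover have "{a, b} \<in> D1" "{a, b} \<in> D2"
    unfolding D1_def D2_def by simp_all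
  ultimately have "{a, x} \<in> D2"
    using diamond_eq unfolding D1_def by blast
  then have "x = y"
    using d xc xb y T2(1) unfolding D2_def by (auto simp: doubleton_eq_iff dest: triangle_vertices_distinct)
  then show False
    using no_K4[OF e ex] ey by (simp add: insert_commute)
qed

lemma triangle_non_diagonal_edgeE:
  assumes "T \<in> Tri"
  obtains e where "e \<in> E" "e \<subseteq> T" "e \<notin> diagonals"
proof -
  obtain a b c where T: "T = {a, b, c}" "{a, b} \<in> E" "{a, c} \<in> E"
    using assms by (rule triangleE)
  then show ?thesis
    using that diagonals_not_adjacent assms by blast
qed

lemma edge_in_at_most_two_triangles:
  assumes "T1 \<in> Tri" "T2 \<in> Tri" "T3 \<in> Tri" "T1 \<noteq> T2" "T1 \<noteq> T3" "T2 \<noteq> T3"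
    and "{a, b} \<subseteq> T1" "{a, b} \<subseteq> T2" "{a, b} \<subseteq> T3" "a \<noteq> b"
  shows False
proof -
  obtain x where x: "T1 = {a, b, x}"
    using assms(1,7,10) by (metis insert_subset triangle_third_vertexE)
  obtain y where y: "T2 = {a, b, y}"
    using assms(2,8,10) by (metis insert_subset triangle_third_vertexE)
  obtain z where z: "T3 = {a, b, z}"
    using assms(3,9,10) by (metis insert_subset triangle_third_vertexE)
  have d: "x \<noteq> y" "x \<noteq> z" "y \<noteq> z"
    using x y z assms(4-6) by auto
  have e: "{a, b} \<in> E" "{a, x} \<in> E" "{b, x} \<in> E" "{a, y} \<in> E" "{b, y} \<in> E" "{a, z} \<in> E" "{b, z} \<in> E"
    using triangle_edge assms(1-3,10) x y z assms(1-3) by (auto dest: triangle_vertices_distinct)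
  define D1 where "D1 = {{a, b}, {a, x}, {b, x}, {a, y}, {b, y}}"
  define D2 where "D2 = {{a, b}, {a, x}, {b, x}, {a, z}, {b, z}}"
  have "D1 \<in> diamonds V E" "D2 \<in> diamonds V E"
    unfolding D1_def D2_def using diamondI[of a b x y] diamondI[of a b x z] e d by simp_all
  moreover have "{a, b} \<in> D1" "{a, b} \<in> D2"
    unfolding D1_def D2_def by simp_all
  ultimately have "{a, y} \<in> D2"
    using diamond_eq unfolding D1_def by blast
  then show False
    using d assms(2,10) y unfolding D2_def by (auto simp: doubleton_eq_iff dest: triangle_vertices_distinct)
qed

lemma card_triangles_containing_edge:
  assumes "e \<in> E"
  shows "card {T \<in> Tri. e \<subseteq> T} = (if e \<in> TE then 1 else 0) + (if e \<in> diagonals then 1 else 0)"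
proof -
  obtain a b where ab: "e = {a, b}" "a \<noteq> b"
    using assms by (rule edgeE)
  consider "e \<notin> TE" | "e \<in> TE" "e \<notin> diagonals" | "e \<in> diagonals"
    by blast
  then show ?thesis
  proof cases
    case 1
    then have "{T \<in> Tri. e \<subseteq> T} = {}"
      using assms unfolding triangle_edges_def by auto
    moreover have "e \<notin> diagonals"
      using 1 diagonals_subset by auto
    ultimately show ?thesis
      using 1 by (simp only: card.empty) simp
  next
    case 2
    then obtain T where "T \<in> Tri" "e \<subseteq> T"
      unfolding triangle_edges_def by auto
    then have "{T' \<in> Tri. e \<subseteq> T'} = {T}"
      using 2 assms non_diagonal_triangle_unique by blast
    then show ?thesis
      using 2 by simp
  next
    case 3
    then obtain T1 T2 where T12: "T1 \<in> Tri" "T2 \<in> Tri" "T1 \<noteq> T2" "e \<subseteq> T1" "e \<subseteq> T2"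
      unfolding diagonals_def by auto
    then have "{T \<in> Tri. e \<subseteq> T} = {T1, T2}"
      using edge_in_at_most_two_triangles[of T1 T2 _ a b] ab by blast
    then show ?thesis
      using 3 T12(3) diagonals_subset by auto
  qed
qed

lemma card_edges_of_triangle:
  assumes "T \<in> Tri"
  shows "card {e \<in> E. e \<subseteq> T} = 3"
proof -
  obtain a b c where T: "T = {a, b, c}" "{a, b} \<in> E" "{a, c} \<in> E" "{b, c} \<in> E"
    "a \<noteq> b" "a \<noteq> c" "b \<noteq> c"
    using assms by (rule triangleE)
  have "{e \<in> E. e \<subseteq> T} = {{a, b}, {a, c}, {b, c}}"
  proof (intro equalityI subsetI)
    fix e
    assume "e \<in> {e \<in> E. e \<subseteq> T}"
    then obtain u v where "e = {u, v}" "u \<noteq> v" "u \<in> T" "v \<in> T"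
      by (metis (no_types, lifting) edgeE insert_subset mem_Collect_eq)
    then show "e \<in> {{a, b}, {a, c}, {b, c}}"
      using T(1) by (auto simp: insert_commute)
  qed (use T in auto)
  then show ?thesis
    using T by (simp add: doubleton_eq_iff)
qed

lemma card_triangle_edges_diagonals: "card TE + card diagonals = 3 * card Tri"
proof -
  have "card TE + card diagonals = (\<Sum>e\<in>E. card {T \<in> Tri. e \<subseteq> T})"
    using card_triangles_containing_edge triangle_edges_subset diagonals_subset
    by (simp add: sum.distrib sum.If_cases finite_E Int_absorb1)
  also have "\<dots> = (\<Sum>T\<in>Tri. card {e \<in> E. e \<subseteq> T})"
    using sum.swap_restrict[OF finite_E finite_triangles, of "\<lambda>_ _. 1::nat" "\<lambda>e T. e \<subseteq> T"] by simp
  also have "\<dots> = 3 * card Tri"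
    using card_edges_of_triangle by simp
  finally show ?thesis .
qed

lemma diamond_diagonalE:
  assumes "D \<in> diamonds V E"
  obtains a b c x where "D = {{a, b}, {a, c}, {b, c}, {a, x}, {b, x}}" "D \<inter> diagonals = {{a, b}}"
    "{a, b} \<in> E" "{a, c} \<in> E" "{b, c} \<in> E" "{a, x} \<in> E" "{b, x} \<in> E" "distinct [a, b, c, x]"
proof -
  obtain a b c x where D: "distinct [a, b, c, x]" "D = {{a, b}, {a, c}, {b, c}, {a, x}, {b, x}}"
    "D \<subseteq> E"
    using assms unfolding diamonds_def by auto
  have e: "{a, b} \<in> E" "{a, c} \<in> E" "{b, c} \<in> E" "{a, x} \<in> E" "{b, x} \<in> E"
    using D(3) unfolding D(2) by simp_all
  have T: "{a, b, c} \<in> Tri" "{b, a, c} \<in> Tri" "{a, b, x} \<in> Tri" "{b, a, x} \<in> Tri"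
    using triangleI e by (auto simp: insert_commute)
  have ne: "{a, b, c} \<noteq> {a, b, x}"
  proof
    assume "{a, b, c} = {a, b, x}"
    then have "x \<in> {a, b, c}"
      by simp
    then show False
      using D(1) by auto
  qed
  have "{a, b} \<in> diagonals"
    unfolding diagonals_def using e(1) T(1,3) ne
    by (intro CollectI conjI bexI[of _ "{a, b, c}"] bexI[of _ "{a, b, x}"]) auto
  then have ab: "{a, b} \<in> diagonals" "{b, a} \<in> diagonals"
    by (simp_all add: insert_commute)
  have "{a, c} \<notin> diagonals" "{b, c} \<notin> diagonals" "{a, x} \<notin> diagonals" "{b, x} \<notin> diagonals"
    using diagonals_not_adjacent[OF T(1) ab(1)] diagonals_not_adjacent[OF T(2) ab(2)]
      diagonals_not_adjacent[OF T(3) ab(1)] diagonals_not_adjacent[OF T(4) ab(2)] by blast+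
  then have "D \<inter> diagonals = {{a, b}}"
    using ab D(2) by auto
  then show ?thesis
    by (rule that[OF D(2) _ e D(1)])
qed

lemma diagonal_in_diamondE:
  assumes "e \<in> diagonals"
  obtains D where "D \<in> diamonds V E" "e \<in> D"
proof -
  obtain T1 T2 where T12: "T1 \<in> Tri" "T2 \<in> Tri" "T1 \<noteq> T2" "e \<subseteq> T1" "e \<subseteq> T2" "e \<in> E"
    using assms unfolding diagonals_def by auto
  obtain a b where ab: "e = {a, b}" "a \<noteq> b"
    using T12(6) by (rule edgeE)
  obtain c where c: "T1 = {a, b, c}"
    using T12(1,4) ab by (metis insert_subset triangle_third_vertexE)
  obtain x where x: "T2 = {a, b, x}"
    using T12(2,5) ab by (metis insert_subset triangle_third_vertexE)
  have "c \<noteq> x"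
    using c x T12(3) by auto
  moreover have "{a, b} \<in> E" "{a, c} \<in> E" "{b, c} \<in> E" "{a, x} \<in> E" "{b, x} \<in> E"
    using triangle_edge T12(1,2) c x ab by (auto dest: triangle_vertices_distinct)
  ultimately have "{{a, b}, {a, c}, {b, c}, {a, x}, {b, x}} \<in> diamonds V E"
    by (rule diamondI[rotated -1])
  then show ?thesis
    using that ab(1) by blast
qed

lemma card_diagonals: "card diagonals = card (diamonds V E)"
proof -
  define diag where "diag D = the_elem (D \<inter> diagonals)" for D
  have diag: "diag D \<in> D \<inter> diagonals" if "D \<in> diamonds V E" for D
    using that unfolding diag_def by (rule diamond_diagonalE) simp
  have "bij_betw diag (diamonds V E) diagonals"
  proof (rule bij_betw_imageI)
    show "inj_on diag (diamonds V E)"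
      using diag diamond_eq by (metis IntD1 inj_onI)
    show "diag ` diamonds V E = diagonals"
    proof (intro equalityI subsetI)
      fix e
      assume e: "e \<in> diagonals"
      then obtain D where D: "D \<in> diamonds V E" "e \<in> D"
        by (rule diagonal_in_diamondE)
      obtain d where "D \<inter> diagonals = {d}"
        using D(1) by (rule diamond_diagonalE) blast
      then have "diag D = e"
        using e D(2) unfolding diag_def by auto
      then show "e \<in> diag ` diamonds V E"
        using D(1) by blast
    qed (use diag in auto)
  qed
  then show ?thesis
    by (simp add: bij_betw_same_card)
qed

lemma card_edges_triangles_diamonds: "card E + card (diamonds V E) = card Eminus + 3 * card Tri"
proof -
  have "E = TE \<union> Eminus" "TE \<inter> Eminus = {}"
    using triangle_edges_subset unfolding minus_edges_def by auto
  then have "card E = card TE + card Eminus"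
    using finite_E by (metis card_Un_disjoint finite_Un)
  then show ?thesis
    using card_triangle_edges_diagonals card_diagonals by simp
qed

lemma clique_edge_or_triangle:
  assumes "clique S" "2 \<le> card S"
  shows "S \<in> E \<or> S \<in> Tri"
proof -
  have adj: "\<And>x y. x \<in> S \<Longrightarrow> y \<in> S \<Longrightarrow> x \<noteq> y \<Longrightarrow> {x, y} \<in> E"
    using assms(1) unfolding clique_def by auto
  consider "card S = 2" | "card S = 3" | "4 \<le> card S"
    using assms(2) by linarith
  then show ?thesis
  proof cases
    case 1
    then show ?thesis
      using adj by (auto simp: card_2_iff)
  next
    case 2
    then show ?thesis
      using adj triangleI by (auto simp: card_3_iff)
  next
    case 3
    then obtain T where T: "T \<subseteq> S" "card T = 4"
      by (meson obtain_subset_with_card_n)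
    then obtain a x y z where "T = {a, x, y, z}" "distinct [a, x, y, z]"
      by (auto simp: card_Suc_eq numeral_eq_Suc)
    then show ?thesis
      using no_K4[of a x y z] adj T(1) by (auto simp: insert_commute)
  qed
qed

end

section \<open>Lower bounds\<close>

definition component :: "'a set \<Rightarrow> 'a set set \<Rightarrow> 'a \<Rightarrow> 'a set" where
  "component V F v = {u \<in> V. (v, u) \<in> (edge_rel F)\<^sup>*}"

lemma sym_edge_rel: "sym (edge_rel F)"
  unfolding sym_def edge_rel_def by (auto simp: insert_commute)

lemma component_eq:
  assumes "z \<in> component V F v"
  shows "component V F z = component V F v"
proof -
  have "(v, z) \<in> (edge_rel F)\<^sup>*" "(z, v) \<in> (edge_rel F)\<^sup>*"
    using assms symD[OF sym_rtrancl[OF sym_edge_rel]] unfolding component_def by auto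
  then show ?thesis
    unfolding component_def by (meson rtrancl_trans)
qed

lemma num_components_le_card:
  assumes "finite M" and meets: "\<And>v. v \<in> V \<Longrightarrow> \<exists>z\<in>M. z \<in> component V F v"
  shows "num_components V F \<le> card M"
proof -
  define rep where "rep K = (SOME z. z \<in> M \<and> z \<in> K)" for K
  have rep: "rep (component V F v) \<in> M \<inter> component V F v" if v: "v \<in> V" for v
  proof -
    obtain z where "z \<in> M" "z \<in> component V F v"
      using meets[OF v] ..
    then show ?thesis
      unfolding rep_def by (metis (mono_tags, lifting) IntI someI)
  qed
  have "inj_on rep (component V F ` V)"
  proof (rule inj_onI)
    fix K1 K2
    assume K: "K1 \<in> component V F ` V" "K2 \<in> component V F ` V" "rep K1 = rep K2"
    obtain v1 v2 where v: "v1 \<in> V" "v2 \<in> V" "K1 = component V F v1" "K2 = component V F v2"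
      using K(1,2) by blast
    then have "rep K1 \<in> K1" "rep K1 \<in> K2"
      using rep[OF v(1)] rep[OF v(2)] K(3) by auto
    then show "K1 = K2"
      using v component_eq by metis
  qed
  moreover have "rep ` component V F ` V \<subseteq> M"
    using rep by blast
  ultimately have "card (component V F ` V) \<le> card M"
    using assms(1) by (rule card_inj_on_le)
  then show ?thesis
    unfolding num_components_def component_def .
qed

locale phylogeny_witness = diamond_disjoint_graph +
  fixes W :: "('a + nat) set" and A :: "(('a + nat) \<times> ('a + nat)) set"
  assumes phylogeny: "phylogeny_digraph V E W A"
begin

lemma finite_W: "finite W"
  and Inl_V_subset_W: "Inl ` V \<subseteq> W"
  and arcs_subset: "A \<subseteq> W \<times> W"
  and acyclic_A: "acyclic A"
  and adjacent_iff: "\<And>u v. u \<in> V \<Longrightarrow> v \<in> V \<Longrightarrow> u \<noteq> v \<Longrightarrow> {u, v} \<in> E \<longleftrightarrow> phylo_adj A (Inl u) (Inl v)"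
  using phylogeny unfolding phylogeny_digraph_def by auto

lemma wf_A: "wf A"
  using finite_acyclic_wf acyclic_A arcs_subset finite_W by (metis finite_SigmaI finite_subset)

definition closed_in_nbhd :: "'a + nat \<Rightarrow> 'a set" where
  "closed_in_nbhd w = {v \<in> V. (Inl v, w) \<in> A \<or> w = Inl v}"

definition cover_vertices :: "('a + nat) set" where
  "cover_vertices = {w \<in> W. 2 \<le> card (closed_in_nbhd w)}"

definition cliques :: "'a set set" where
  "cliques = closed_in_nbhd ` cover_vertices"

definition entered_vertices :: "'a set" where
  "entered_vertices = {v \<in> V. 2 \<le> card (closed_in_nbhd (Inl v))}"

lemma finite_closed_in_nbhd: "finite (closed_in_nbhd w)"
  using finite_V unfolding closed_in_nbhd_def by simp

lemma finite_cliques: "finite cliques"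
  using finite_W unfolding cliques_def cover_vertices_def by simp

lemma clique_closed_in_nbhd: "clique (closed_in_nbhd w)"
  unfolding clique_def
proof (intro conjI ballI impI)
  fix x y
  assume xy: "x \<in> closed_in_nbhd w" "y \<in> closed_in_nbhd w" "x \<noteq> y"
  then have "phylo_adj A (Inl x) (Inl y)"
    unfolding closed_in_nbhd_def phylo_adj_def by auto
  then show "{x, y} \<in> E"
    using adjacent_iff xy unfolding closed_in_nbhd_def by blast
qed (auto simp: closed_in_nbhd_def)

lemma cliques_edge_or_triangle: "C \<in> cliques \<Longrightarrow> C \<in> E \<or> C \<in> Tri"
  unfolding cliques_def cover_vertices_def using clique_edge_or_triangle clique_closed_in_nbhd by auto

lemma edge_in_clique:
  assumes "e \<in> E"
  obtains C where "C \<in> cliques" "e \<subseteq> C"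
proof -
  obtain u v where uv: "e = {u, v}" "u \<noteq> v" "u \<in> V" "v \<in> V"
    using assms by (rule edgeE)
  have "phylo_adj A (Inl u) (Inl v)"
    using adjacent_iff uv assms by auto
  then obtain w where w: "w \<in> W" "e \<subseteq> closed_in_nbhd w"
    using uv Inl_V_subset_W arcs_subset unfolding phylo_adj_def closed_in_nbhd_def by blast
  then have "2 \<le> card (closed_in_nbhd w)"
    using card_mono[OF finite_closed_in_nbhd] card_edge[OF assms] by metis
  then show ?thesis
    using that w unfolding cliques_def cover_vertices_def by blast
qed

definition triangular_cliques :: "'a set set" where
  "triangular_cliques = cliques \<inter> (Tri \<union> TE)"

lemma Eminus_subset_cliques: "Eminus \<subseteq> cliques - triangular_cliques"
proof
  fix e
  assume e: "e \<in> Eminus"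
  then have eE: "e \<in> E" and eT: "e \<notin> TE"
    unfolding minus_edges_def by auto
  obtain C where C: "C \<in> cliques" "e \<subseteq> C"
    using eE by (rule edge_in_clique)
  then have "C \<notin> Tri"
    using eE eT unfolding triangle_edges_def by auto
  then have "e = C"
    using C cliques_edge_or_triangle edge_subset_edge_eq eE by blast
  then show "e \<in> cliques - triangular_cliques"
    using C(1) eT triangle_edge_disjoint eE unfolding triangular_cliques_def by auto
qed

lemma non_diagonal_edge_in_cliques:
  assumes "T \<in> Tri" "T \<notin> cliques" "e \<in> E" "e \<subseteq> T" "e \<notin> diagonals"
  shows "e \<in> cliques"
proof -
  obtain C where C: "C \<in> cliques" "e \<subseteq> C"
    using assms(3) by (rule edge_in_clique)
  have "C \<notin> Tri"
    using non_diagonal_triangle_unique[OF assms(3,5) _ assms(1) C(2) assms(4)] C(1) assms(2) by blast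
  then show ?thesis
    using C cliques_edge_or_triangle edge_subset_edge_eq assms(3) by metis
qed

text \<open>Each triangle is a clique itself, or else its non-diagonal edge is one; the latter
  determines the triangle.\<close>

lemma card_Eminus_triangles_le_cliques: "card Eminus + card Tri \<le> card cliques"
proof -
  define pick where "pick T = (SOME e. e \<in> E \<and> e \<subseteq> T \<and> e \<notin> diagonals)" for T
  have pick: "pick T \<in> E \<and> pick T \<subseteq> T \<and> pick T \<notin> diagonals" if "T \<in> Tri" for T
    using triangle_non_diagonal_edgeE[OF that] unfolding pick_def by (metis (mono_tags, lifting) someI)
  define g where "g T = (if T \<in> cliques then T else pick T)" for T
  have g_cliques: "g ` Tri \<subseteq> cliques"
    using pick non_diagonal_edge_in_cliques unfolding g_def by auto
  have "inj_on g Tri"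
  proof (rule inj_onI)
    fix T1 T2
    assume T: "T1 \<in> Tri" "T2 \<in> Tri" "g T1 = g T2"
    have "g T \<in> Tri \<longleftrightarrow> T \<in> cliques" if "T \<in> Tri" for T
      using that pick[OF that] triangle_edge_disjoint unfolding g_def by auto
    then have "T1 \<in> cliques \<longleftrightarrow> T2 \<in> cliques"
      using T by metis
    then show "T1 = T2"
      using T pick[OF T(1)] pick[OF T(2)] non_diagonal_triangle_unique[of "pick T1" T1 T2]
      unfolding g_def by (auto split: if_splits)
  qed
  moreover have "Eminus \<inter> g ` Tri = {}"
    using pick triangle_edge_disjoint unfolding g_def minus_edges_def triangle_edges_def by auto
  ultimately have "card Eminus + card Tri = card (Eminus \<union> g ` Tri)"
    using finite_subset[OF Eminus_subset finite_E] finite_triangles by (simp add: card_Un_disjoint card_image)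
  also have "\<dots> \<le> card cliques"
    using Eminus_subset_cliques g_cliques finite_cliques by (intro card_mono) auto
  finally show ?thesis .
qed

lemma card_cliques_le: "card cliques \<le> card (W - Inl ` V) + card entered_vertices"
proof -
  have finite_cover_vertices: "finite cover_vertices"
    using finite_W unfolding cover_vertices_def by simp
  have "card cliques \<le> card cover_vertices"
    unfolding cliques_def using finite_cover_vertices by (rule card_image_le)
  also have "\<dots> \<le> card ((W - Inl ` V) \<union> Inl ` entered_vertices)"
    using finite_W finite_V unfolding cover_vertices_def entered_vertices_def by (intro card_mono) auto
  also have "\<dots> \<le> card (W - Inl ` V) + card (Inl ` entered_vertices :: ('a + nat) set)"
    by (rule card_Un_le)
  finally show ?thesis
    by (simp add: card_image)
qed

lemma card_entered_vertices_less:
  assumes "V \<noteq> {}"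
  shows "card entered_vertices < card V"
proof -
  obtain z where z: "z \<in> Inl ` V" "\<And>y. (y, z) \<in> A \<Longrightarrow> y \<notin> Inl ` V"
    using wfE_min[OF wf_A] assms by (metis ex_in_conv image_eqI)
  then obtain v where v: "z = Inl v" "v \<in> V"
    by blast
  then have "closed_in_nbhd (Inl v) = {v}"
    using z(2) unfolding closed_in_nbhd_def by auto
  then have "v \<notin> entered_vertices"
    unfolding entered_vertices_def by simp
  then have "entered_vertices \<subset> V"
    using v unfolding entered_vertices_def by blast
  then show ?thesis
    using finite_V by (rule psubset_card_mono[rotated])
qed

theorem phylogeny_lower_bound:
  assumes "V \<noteq> {}"
  shows "card Eminus + card Tri + 1 \<le> card (W - Inl ` V) + card V"
  using card_Eminus_triangles_le_cliques card_cliques_le card_entered_vertices_less[OF assms] by linarith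

definition Eminus_arcs :: "('a \<times> 'a) set" where
  "Eminus_arcs = {(u, v). (Inl u, Inl v) \<in> A \<and> {u, v} \<in> Eminus}"

definition Eminus_sources :: "'a set" where
  "Eminus_sources = {v \<in> V. \<forall>u. (u, v) \<notin> Eminus_arcs}"

lemma component_meets_Eminus_sources:
  assumes "v \<in> V"
  shows "\<exists>z\<in>Eminus_sources. z \<in> component V Eminus v"
proof -
  have "wf Eminus_arcs"
    by (rule wf_subset[OF wf_inv_image[OF wf_A, of Inl]]) (auto simp: Eminus_arcs_def)
  moreover have "v \<in> component V Eminus v"
    using assms unfolding component_def by simp
  ultimately obtain z where z: "z \<in> component V Eminus v"
    and min: "\<And>u. (u, z) \<in> Eminus_arcs \<Longrightarrow> u \<notin> component V Eminus v"
    by (metis wfE_min)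
  have "u \<in> component V Eminus v" if "(u, z) \<in> Eminus_arcs" for u
  proof -
    have uz: "{u, z} \<in> Eminus"
      using that unfolding Eminus_arcs_def by simp
    then have "{u, z} \<in> E"
      using Eminus_subset by blast
    then have "(z, u) \<in> edge_rel Eminus" "u \<in> V"
      using uz edge_distinct[of u z] edge_vertices[of u z] unfolding edge_rel_def
      by (auto simp: insert_commute)
    then show ?thesis
      using z unfolding component_def by (auto intro: rtrancl_into_rtrancl)
  qed
  then show ?thesis
    using z min unfolding Eminus_sources_def component_def by blast
qed

definition triangle_entered_vertices :: "'a set" where
  "triangle_entered_vertices = {v \<in> entered_vertices. closed_in_nbhd (Inl v) \<in> triangular_cliques}"

lemma card_triangle_entered_vertices_le: "card triangle_entered_vertices \<le> card triangular_cliques"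
proof (rule card_inj_on_le)
  show "inj_on (\<lambda>v. closed_in_nbhd (Inl v)) triangle_entered_vertices"
  proof (rule inj_onI, rule ccontr)
    fix v v'
    assume vv: "v \<in> triangle_entered_vertices" "v' \<in> triangle_entered_vertices"
      "closed_in_nbhd (Inl v) = closed_in_nbhd (Inl v')" "v \<noteq> v'"
    then have "(Inl v, Inl v') \<in> A" "(Inl v', Inl v) \<in> A"
      unfolding triangle_entered_vertices_def entered_vertices_def closed_in_nbhd_def by blast+
    then show False
      using acyclic_A unfolding acyclic_def by (meson trancl.simps)
  qed
  show "finite triangular_cliques"
    using finite_cliques unfolding triangular_cliques_def by simp
qed (auto simp: triangle_entered_vertices_def)

text \<open>The closed in-neighbourhood of such a vertex v is an edge uv of G^-, and it comes with an
  arc from u to v.\<close>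

lemma entered_vertices_not_sources: "entered_vertices - triangle_entered_vertices \<subseteq> V - Eminus_sources"
proof
  fix v
  assume v: "v \<in> entered_vertices - triangle_entered_vertices"
  then have "closed_in_nbhd (Inl v) \<in> cliques" "closed_in_nbhd (Inl v) \<notin> Tri \<union> TE"
    using Inl_V_subset_W
    unfolding entered_vertices_def triangle_entered_vertices_def triangular_cliques_def cliques_def cover_vertices_def
    by auto
  then have C: "closed_in_nbhd (Inl v) \<in> Eminus"
    using cliques_edge_or_triangle unfolding minus_edges_def by blast
  moreover have "v \<in> closed_in_nbhd (Inl v)"
    using v unfolding entered_vertices_def closed_in_nbhd_def by simp
  moreover obtain p q where pq: "closed_in_nbhd (Inl v) = {p, q}" "p \<noteq> q"
    using C Eminus_subset by (meson edgeE subsetD)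
  ultimately obtain u where u: "closed_in_nbhd (Inl v) = {u, v}" "u \<noteq> v"
    by (cases "v = p") (auto simp: insert_commute)
  then have "(u, v) \<in> Eminus_arcs"
    using C unfolding Eminus_arcs_def closed_in_nbhd_def by auto
  then show "v \<in> V - Eminus_sources"
    using v unfolding entered_vertices_def Eminus_sources_def by auto
qed

theorem phylogeny_lower_bound_components:
  "card Eminus + num_components V Eminus \<le> card (W - Inl ` V) + card V"
proof -
  have fin: "finite entered_vertices" "finite Eminus_sources" "finite triangular_cliques"
    using finite_V finite_cliques
    unfolding entered_vertices_def Eminus_sources_def triangular_cliques_def by simp_all
  have "triangle_entered_vertices \<subseteq> entered_vertices" "Eminus_sources \<subseteq> V" "triangular_cliques \<subseteq> cliques"
    unfolding triangle_entered_vertices_def Eminus_sources_def triangular_cliques_def by auto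
  then have "card entered_vertices = card triangle_entered_vertices + card (entered_vertices - triangle_entered_vertices)"
    "card V = card Eminus_sources + card (V - Eminus_sources)"
    "card cliques = card triangular_cliques + card (cliques - triangular_cliques)"
    using fin finite_V finite_cliques card_Int_Diff by (metis Int_absorb1)+
  moreover have "card (entered_vertices - triangle_entered_vertices) \<le> card (V - Eminus_sources)"
    using entered_vertices_not_sources finite_V by (intro card_mono) auto
  moreover have "card Eminus \<le> card (cliques - triangular_cliques)"
    using Eminus_subset_cliques finite_cliques by (intro card_mono) auto
  moreover have "num_components V Eminus \<le> card Eminus_sources"
    using num_components_le_card[OF fin(2) component_meets_Eminus_sources] .
  ultimately show ?thesis
    using card_cliques_le card_triangle_entered_vertices_le by linarith
qed

end

section \<open>Phylogeny digraphs from clique covers\<close>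

definition clique_digraph :: "'a set \<Rightarrow> ('a \<Rightarrow> 'a set) \<Rightarrow> 'a set list \<Rightarrow> (('a + nat) \<times> ('a + nat)) set"
  where "clique_digraph V C qs =
    {(Inl u, Inl v) | u v. v \<in> V \<and> u \<in> C v \<and> u \<noteq> v} \<union> {(Inl u, Inr i) | u i. i < length qs \<and> u \<in> qs ! i}"

lemma clique_digraph_arcs:
  "(Inl u, Inl v) \<in> clique_digraph V C qs \<longleftrightarrow> v \<in> V \<and> u \<in> C v \<and> u \<noteq> v"
  "(Inl u, Inr i) \<in> clique_digraph V C qs \<longleftrightarrow> i < length qs \<and> u \<in> qs ! i"
  "(Inr i, y) \<notin> clique_digraph V C qs"
  unfolding clique_digraph_def by auto

lemma phylo_adj_clique_digraph:
  assumes "\<And>v. v \<in> V \<Longrightarrow> v \<in> C v"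
  shows "phylo_adj (clique_digraph V C qs) (Inl u) (Inl v) \<longleftrightarrow>
    u \<noteq> v \<and> ((\<exists>x\<in>V. {u, v} \<subseteq> C x) \<or> (\<exists>q\<in>set qs. {u, v} \<subseteq> q))"
    (is "?adj \<longleftrightarrow> _ \<and> ?cover")
proof
  assume adj: ?adj
  consider "(Inl u, Inl v) \<in> clique_digraph V C qs" | "(Inl v, Inl u) \<in> clique_digraph V C qs"
    | x where "(Inl u, Inl x) \<in> clique_digraph V C qs" "(Inl v, Inl x) \<in> clique_digraph V C qs"
    | i where "(Inl u, Inr i) \<in> clique_digraph V C qs" "(Inl v, Inr i) \<in> clique_digraph V C qs"
    using adj unfolding phylo_adj_def by (metis sum.exhaust)
  then have ?cover
    using assms by cases (auto simp: clique_digraph_arcs)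
  then show "u \<noteq> v \<and> ?cover"
    using adj unfolding phylo_adj_def by simp
next
  assume uv: "u \<noteq> v \<and> ?cover"
  then consider x where "x \<in> V" "{u, v} \<subseteq> C x" | i where "i < length qs" "{u, v} \<subseteq> qs ! i"
    by (auto simp: in_set_conv_nth)
  then show ?adj
  proof cases
    case (1 x)
    then have "(Inl u, Inl v) \<in> clique_digraph V C qs \<or> (Inl v, Inl u) \<in> clique_digraph V C qs
      \<or> (Inl u, Inl x) \<in> clique_digraph V C qs \<and> (Inl v, Inl x) \<in> clique_digraph V C qs"
      using uv by (auto simp: clique_digraph_arcs)
    then show ?thesis
      using uv unfolding phylo_adj_def by blast
  next
    case (2 i)
    then have "(Inl u, Inr i) \<in> clique_digraph V C qs" "(Inl v, Inr i) \<in> clique_digraph V C qs"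
      by (auto simp: clique_digraph_arcs)
    then show ?thesis
      using uv unfolding phylo_adj_def by blast
  qed
qed

lemma acyclic_clique_digraph:
  fixes r :: "'a \<Rightarrow> nat"
  assumes "finite V" and C: "\<And>v u. v \<in> V \<Longrightarrow> u \<in> C v \<Longrightarrow> u \<noteq> v \<Longrightarrow> r u < r v"
    and Q: "\<And>q. q \<in> set qs \<Longrightarrow> q \<subseteq> V"
  shows "acyclic (clique_digraph V C qs)"
proof -
  define f :: "'a + nat \<Rightarrow> nat" where "f = case_sum r (\<lambda>_. Suc (Max (r ` V)))"
  have "r u < Suc (Max (r ` V))" if "i < length qs" "u \<in> qs ! i" for u i
    using Q[OF nth_mem[OF that(1)]] that(2) assms(1) by (auto simp: le_imp_less_Suc)
  then have "clique_digraph V C qs \<subseteq> inv_image less_than f"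
    using C unfolding clique_digraph_def f_def by auto
  then show ?thesis
    using wf_acyclic wf_subset by blast
qed

context finite_simple_graph
begin

lemma clique_subset: "clique S \<Longrightarrow> S \<subseteq> V"
  unfolding clique_def by simp

lemma phylogeny_digraph_clique_digraph:
  fixes r :: "'a \<Rightarrow> nat"
  assumes C: "\<And>v. v \<in> V \<Longrightarrow> v \<in> C v \<and> clique (C v) \<and> (\<forall>u\<in>C v. u \<noteq> v \<longrightarrow> r u < r v)"
    and Q: "\<And>q. q \<in> set qs \<Longrightarrow> clique q"
    and cover: "\<And>e. e \<in> E \<Longrightarrow> (\<exists>v\<in>V. e \<subseteq> C v) \<or> (\<exists>q\<in>set qs. e \<subseteq> q)"
  shows "phylogeny_digraph V E (Inl ` V \<union> Inr ` {..<length qs}) (clique_digraph V C qs)"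
proof -
  have C_sub: "C v \<subseteq> V" if "v \<in> V" for v
    using C[OF that] clique_subset by blast
  have Q_sub: "u \<in> V" if "i < length qs" "u \<in> qs ! i" for u i
    using Q[OF nth_mem[OF that(1)]] clique_subset that(2) by blast
  show ?thesis
    unfolding phylogeny_digraph_def
  proof (intro conjI allI impI ballI)
    show "clique_digraph V C qs \<subseteq> (Inl ` V \<union> Inr ` {..<length qs}) \<times> (Inl ` V \<union> Inr ` {..<length qs})"
      using C_sub Q_sub unfolding clique_digraph_def by auto
    show "acyclic (clique_digraph V C qs)"
      using acyclic_clique_digraph[OF finite_V, of C r qs] C Q clique_subset by blast
    fix u v
    assume uv: "u \<in> V" "v \<in> V" "u \<noteq> v"
    have adj: "phylo_adj (clique_digraph V C qs) (Inl u) (Inl v) \<longleftrightarrow>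
        (\<exists>x\<in>V. {u, v} \<subseteq> C x) \<or> (\<exists>q\<in>set qs. {u, v} \<subseteq> q)"
      using phylo_adj_clique_digraph[of V C] C uv(3) by blast
    show "{u, v} \<in> E \<longleftrightarrow> phylo_adj (clique_digraph V C qs) (Inl u) (Inl v)"
    proof
      assume "phylo_adj (clique_digraph V C qs) (Inl u) (Inl v)"
      then obtain S where "clique S" "{u, v} \<subseteq> S"
        using adj C Q by blast
      then show "{u, v} \<in> E"
        using uv(3) unfolding clique_def by blast
    qed (use adj cover in blast)
  qed (use finite_V C_sub Q_sub in \<open>auto simp: clique_digraph_def\<close>)
qed

lemma phylogeny_digraph_of_cliques:
  fixes r :: "'a \<Rightarrow> nat"
  assumes C: "\<And>v. v \<in> V \<Longrightarrow> v \<in> C v \<and> clique (C v) \<and> (\<forall>u\<in>C v. u \<noteq> v \<longrightarrow> r u < r v)"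
    and "finite Q" and Q: "\<And>q. q \<in> Q \<Longrightarrow> clique q"
    and cover: "\<And>e. e \<in> E \<Longrightarrow> (\<exists>v\<in>V. e \<subseteq> C v) \<or> (\<exists>q\<in>Q. e \<subseteq> q)"
  obtains W A where "phylogeny_digraph V E W A" "card (W - Inl ` V) = card Q"
proof -
  obtain qs where qs: "set qs = Q" "distinct qs"
    using finite_distinct_list[OF \<open>finite Q\<close>] by blast
  have "(Inl ` V \<union> Inr ` {..<length qs}) - Inl ` V = Inr ` {..<length qs}"
    by auto
  then have "card ((Inl ` V \<union> Inr ` {..<length qs}) - Inl ` V) = card Q"
    using qs distinct_card by (metis card_image card_lessThan inj_Inr inj_on_subset subset_UNIV)
  then show ?thesis
    using that phylogeny_digraph_clique_digraph[of C r qs] assms qs(1) by blast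
qed

definition last_triangles :: "('a \<Rightarrow> nat) \<Rightarrow> 'a \<Rightarrow> 'a set set" where
  "last_triangles r v = {T \<in> Tri. v \<in> T \<and> (\<forall>u\<in>T. u \<noteq> v \<longrightarrow> r u < r v)}"

definition last_Eminus_edges :: "('a \<Rightarrow> nat) \<Rightarrow> 'a \<Rightarrow> 'a set set" where
  "last_Eminus_edges r v = {e \<in> Eminus. v \<in> e \<and> (\<forall>u\<in>e. u \<noteq> v \<longrightarrow> r u < r v)}"

definition uncovered_vertices :: "('a \<Rightarrow> nat) \<Rightarrow> 'a \<Rightarrow> 'a set" where
  "uncovered_vertices r root =
    {v \<in> V. v \<noteq> root \<and> last_triangles r v = {} \<and> last_Eminus_edges r v = {}}"

definition last_clique :: "('a \<Rightarrow> nat) \<Rightarrow> 'a \<Rightarrow> 'a set" where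
  "last_clique r v =
    (if last_triangles r v \<noteq> {} then SOME T. T \<in> last_triangles r v
     else if last_Eminus_edges r v \<noteq> {} then SOME e. e \<in> last_Eminus_edges r v
     else {v})"

lemma last_clique_cases:
  "last_triangles r v \<noteq> {} \<Longrightarrow> last_clique r v \<in> last_triangles r v"
  "last_triangles r v = {} \<Longrightarrow> last_Eminus_edges r v \<noteq> {} \<Longrightarrow> last_clique r v \<in> last_Eminus_edges r v"
  "last_triangles r v = {} \<Longrightarrow> last_Eminus_edges r v = {} \<Longrightarrow> last_clique r v = {v}"
  unfolding last_clique_def by (simp_all add: some_in_eq)

lemma last_clique:
  assumes "v \<in> V"
  shows "v \<in> last_clique r v \<and> clique (last_clique r v) \<and> (\<forall>u\<in>last_clique r v. u \<noteq> v \<longrightarrow> r u < r v)"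
proof -
  consider "last_triangles r v \<noteq> {}" | "last_triangles r v = {}" "last_Eminus_edges r v \<noteq> {}"
    | "last_triangles r v = {}" "last_Eminus_edges r v = {}"
    by blast
  then show ?thesis
  proof cases
    case 1
    then show ?thesis
      using last_clique_cases(1)[of r v] clique_triangle unfolding last_triangles_def by auto
  next
    case 2
    then show ?thesis
      using last_clique_cases(2)[of r v] clique_edge Eminus_subset unfolding last_Eminus_edges_def by auto
  next
    case 3
    then show ?thesis
      using last_clique_cases(3) assms clique_singleton by simp
  qed
qed

lemma last_clique_mem:
  assumes "last_triangles r v \<noteq> {} \<or> last_Eminus_edges r v \<noteq> {}"
  shows "last_clique r v \<in> Tri \<union> Eminus"
proof (cases "last_triangles r v = {}")
  case True
  then have "last_clique r v \<in> last_Eminus_edges r v"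
    using assms last_clique_cases(2) by blast
  then show ?thesis
    unfolding last_Eminus_edges_def by simp
next
  case False
  then show ?thesis
    using last_clique_cases(1)[of r v] unfolding last_triangles_def by simp
qed

lemma inj_on_last_clique: "inj_on (last_clique r) V"
proof (rule inj_onI, rule ccontr)
  fix v w
  assume vw: "v \<in> V" "w \<in> V" "last_clique r v = last_clique r w" "v \<noteq> w"
  then have "r w < r v"
    using vw last_clique[OF vw(1), of r] last_clique[OF vw(2), of r] by auto
  moreover have "r v < r w"
    using vw last_clique[OF vw(1), of r] last_clique[OF vw(2), of r] by auto
  ultimately show False
    by simp
qed

theorem phylogeny_digraph_from_ranking:
  fixes r :: "'a \<Rightarrow> nat"
  assumes root: "root \<in> V"
  obtains W A where "phylogeny_digraph V E W A"
    "card (W - Inl ` V) + card V = card Tri + card Eminus + card (uncovered_vertices r root) + 1"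
proof -
  define U where "U = uncovered_vertices r root"
  define Vc where "Vc = V - {root} - U"
  define Q where "Q = (Tri \<union> Eminus) - last_clique r ` Vc"
  have fin: "finite (Tri \<union> Eminus)"
    using finite_triangles finite_subset[OF Eminus_subset finite_E] by simp
  have Vc_cliques: "last_clique r ` Vc \<subseteq> Tri \<union> Eminus"
    using last_clique_mem unfolding Vc_def U_def uncovered_vertices_def by auto
  have cover: "(\<exists>v\<in>V. e \<subseteq> last_clique r v) \<or> (\<exists>q\<in>Q. e \<subseteq> q)" if e: "e \<in> E" for e
  proof -
    have "e \<in> Eminus \<or> (\<exists>T\<in>Tri. e \<subseteq> T)"
      using e unfolding minus_edges_def triangle_edges_def by blast
    then obtain B where "B \<in> Tri \<union> Eminus" "e \<subseteq> B"
      by blast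
    then show ?thesis
      unfolding Q_def Vc_def by blast
  qed
  have "finite Q"
    using fin unfolding Q_def by simp
  moreover have "clique q" if "q \<in> Q" for q
    using that clique_triangle clique_edge Eminus_subset unfolding Q_def by blast
  ultimately obtain W A where WA: "phylogeny_digraph V E W A" "card (W - Inl ` V) = card Q"
    using phylogeny_digraph_of_cliques[OF last_clique _ _ cover] by blast
  have "Tri \<inter> Eminus = {}"
    using triangle_edge_disjoint Eminus_subset by blast
  then have "card Tri + card Eminus = card (Tri \<union> Eminus)"
    using fin by (simp add: card_Un_disjoint)
  also have "\<dots> = card (last_clique r ` Vc) + card Q"
    unfolding Q_def using card_Int_Diff[OF fin, of "last_clique r ` Vc"] Vc_cliques
    by (simp add: Int_absorb1)
  also have "card (last_clique r ` Vc) = card Vc"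
    by (rule card_image[OF inj_on_subset[OF inj_on_last_clique]]) (auto simp: Vc_def)
  finally have "card Tri + card Eminus = card Vc + card Q" .
  moreover have "card (V - {root}) = card U + card Vc"
    using card_Int_Diff[of "V - {root}" U] finite_V unfolding Vc_def U_def uncovered_vertices_def
    by (simp add: Int_absorb1 subset_iff)
  moreover have "card V = card (V - {root}) + 1"
    using card.remove[OF finite_V root] by simp
  ultimately show ?thesis
    using that WA unfolding U_def by simp
qed

end
section \<open>Upper bounds\<close>

lemma rtrancl_leaves_set:
  assumes "(a, z) \<in> R\<^sup>*" "a \<in> S" "z \<notin> S"
  obtains x y where "x \<in> S" "y \<notin> S" "(x, y) \<in> R"
  using assms by (induction rule: rtrancl_induct) auto

definition greedy_search_list ::
  "'a set \<Rightarrow> 'a set set \<Rightarrow> 'a \<Rightarrow> ('a set \<Rightarrow> 'a \<Rightarrow> bool) \<Rightarrow> 'a list \<Rightarrow> bool" where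
  "greedy_search_list V F root P L \<longleftrightarrow> distinct L \<and> set L \<subseteq> V \<and> L \<noteq> [] \<and> L ! 0 = root \<and>
    (\<forall>i<length L. 0 < i \<longrightarrow> (\<exists>j<i. {L ! j, L ! i} \<in> F)) \<and>
    (\<forall>i<length L. \<forall>z\<in>V - set (take i L). P (set (take i L)) z \<longrightarrow> P (set (take i L)) (L ! i))"

lemma greedy_search_list_snoc:
  assumes L: "greedy_search_list V F root P L" and x: "x \<in> V" "x \<notin> set L" "\<exists>a\<in>set L. {a, x} \<in> F"
    and preferred: "\<forall>z\<in>V - set L. P (set L) z \<longrightarrow> P (set L) x"
  shows "greedy_search_list V F root P (L @ [x])"
  unfolding greedy_search_list_def
proof (intro conjI allI impI ballI)
  show "distinct (L @ [x])" "set (L @ [x]) \<subseteq> V" "L @ [x] \<noteq> []" "(L @ [x]) ! 0 = root"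
    using L x unfolding greedy_search_list_def by (auto simp: nth_append)
next
  fix i
  assume i: "i < length (L @ [x])" "0 < i"
  show "\<exists>j<i. {(L @ [x]) ! j, (L @ [x]) ! i} \<in> F"
  proof (cases "i < length L")
    case True
    then obtain j where "j < i" "{L ! j, L ! i} \<in> F"
      using L i unfolding greedy_search_list_def by auto
    then show ?thesis
      using True by (intro exI[of _ j]) (auto simp: nth_append)
  next
    case False
    then have i_eq: "i = length L"
      using i by auto
    obtain j where "j < length L" "{L ! j, x} \<in> F"
      using x(3) by (auto simp: in_set_conv_nth)
    then show ?thesis
      using i_eq by (intro exI[of _ j]) (auto simp: nth_append)
  qed
next
  fix i z
  assume i: "i < length (L @ [x])" and z: "z \<in> V - set (take i (L @ [x]))"
    and Pz: "P (set (take i (L @ [x]))) z"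
  show "P (set (take i (L @ [x]))) ((L @ [x]) ! i)"
  proof (cases "i < length L")
    case True
    then show ?thesis
      using L z Pz unfolding greedy_search_list_def by (auto simp: nth_append)
  next
    case False
    then have "i = length L"
      using i by auto
    then show ?thesis
      using preferred z Pz by auto
  qed
qed

lemma greedy_search_list_exists:
  assumes "root \<in> V" and conn: "\<And>v. v \<in> V \<Longrightarrow> (root, v) \<in> (edge_rel F)\<^sup>*" and "F \<subseteq> Pow V"
    and P_adj: "\<And>S z. P S z \<Longrightarrow> \<exists>a\<in>S. {a, z} \<in> F"
    and "1 \<le> k" "k \<le> card V"
  shows "\<exists>L. greedy_search_list V F root P L \<and> length L = k"
  using assms(5,6)
proof (induction k)
  case 0
  then show ?case
    by simp
next
  case (Suc k)
  show ?case
  proof (cases "k = 0")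
    case True
    have "greedy_search_list V F root P [root]"
      using assms(1) P_adj unfolding greedy_search_list_def by auto
    then show ?thesis
      using True by auto
  next
    case False
    then obtain L where L: "greedy_search_list V F root P L" "length L = k"
      using Suc by auto
    then have L_sub: "set L \<subseteq> V" and root_L: "root \<in> set L"
      unfolding greedy_search_list_def by (auto simp: hd_conv_nth[symmetric])
    have "card (set L) = k"
      using L unfolding greedy_search_list_def by (simp add: distinct_card)
    then have "set L \<noteq> V"
      using Suc.prems(2) by auto
    then obtain z where z: "z \<in> V" "z \<notin> set L"
      using L_sub by blast
    obtain x where x: "x \<in> V" "x \<notin> set L" "\<exists>a\<in>set L. {a, x} \<in> F"
      and preferred: "\<forall>z\<in>V - set L. P (set L) z \<longrightarrow> P (set L) x"
    proof (cases "\<exists>y\<in>V - set L. P (set L) y")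
      case True
      then show ?thesis
        using that P_adj by blast
    next
      case False
      obtain a b where "a \<in> set L" "b \<notin> set L" "(a, b) \<in> edge_rel F"
        using rtrancl_leaves_set[OF conn[OF z(1)] root_L z(2)] .
      then show ?thesis
        using that[of b] False \<open>F \<subseteq> Pow V\<close> unfolding edge_rel_def by blast
    qed
    then show ?thesis
      using greedy_search_list_snoc[OF L(1) x preferred] L(2) by auto
  qed
qed

lemma greedy_search_ranking:
  assumes "finite V" "root \<in> V" and conn: "\<And>v. v \<in> V \<Longrightarrow> (root, v) \<in> (edge_rel F)\<^sup>*"
    and "F \<subseteq> Pow V" and P_adj: "\<And>S z. P S z \<Longrightarrow> \<exists>a\<in>S. {a, z} \<in> F"
  obtains r :: "'a \<Rightarrow> nat" where "inj_on r V"
    "\<And>v. v \<in> V \<Longrightarrow> v \<noteq> root \<Longrightarrow> \<exists>u\<in>V. r u < r v \<and> {u, v} \<in> F"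
    "\<And>v z. v \<in> V \<Longrightarrow> z \<in> V \<Longrightarrow> r v \<le> r z \<Longrightarrow> P {u \<in> V. r u < r v} z \<Longrightarrow> P {u \<in> V. r u < r v} v"
proof -
  have "1 \<le> card V"
    using card_gt_0_iff[of V] assms(1,2) by auto
  then obtain L where L: "greedy_search_list V F root P L" "length L = card V"
    using greedy_search_list_exists[OF assms(2) conn assms(4) P_adj _ order_refl] by blast
  then have dL: "distinct L" and L_sub: "set L \<subseteq> V" and L0: "L ! 0 = root"
    and parent: "\<And>i. i < length L \<Longrightarrow> 0 < i \<Longrightarrow> \<exists>j<i. {L ! j, L ! i} \<in> F"
    and greedy: "\<And>i z. i < length L \<Longrightarrow> z \<in> V - set (take i L) \<Longrightarrow> P (set (take i L)) z
      \<Longrightarrow> P (set (take i L)) (L ! i)"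
    unfolding greedy_search_list_def by blast+
  have setL: "set L = V"
    using card_subset_eq[OF assms(1) L_sub] distinct_card[OF dL] L(2) by simp
  define r where "r v = (THE i. i < length L \<and> L ! i = v)" for v
  have r_nth: "r (L ! i) = i" if "i < length L" for i
    unfolding r_def using that dL by (auto simp: nth_eq_iff_index_eq)
  have V_nth: "\<exists>i<length L. v = L ! i" if "v \<in> V" for v
    using that setL by (metis in_set_conv_nth)
  have before: "{u \<in> V. r u < i} = set (take i L)" if i: "i < length L" for i
  proof (intro equalityI subsetI)
    fix u
    assume "u \<in> {u \<in> V. r u < i}"
    then obtain j where "j < length L" "u = L ! j" "j < i"
      using V_nth r_nth by force
    then show "u \<in> set (take i L)"
      by (auto simp: in_set_conv_nth intro!: exI[of _ j])
  next
    fix u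
    assume "u \<in> set (take i L)"
    then obtain j where "j < i" "u = L ! j"
      using i by (auto simp: in_set_conv_nth)
    then show "u \<in> {u \<in> V. r u < i}"
      using r_nth i setL by auto
  qed
  show ?thesis
  proof
    show "inj_on r V"
    proof (rule inj_onI)
      fix u v
      assume uv: "u \<in> V" "v \<in> V" "r u = r v"
      obtain i j where "i < length L" "u = L ! i" "j < length L" "v = L ! j"
        using V_nth uv(1,2) by blast
      then show "u = v"
        using uv(3) r_nth by simp
    qed
  next
    fix v
    assume v: "v \<in> V" "v \<noteq> root"
    then obtain i where i: "i < length L" "v = L ! i"
      using V_nth by blast
    then have "0 < i"
      using v(2) L0 by (cases i) simp_all
    then obtain j where j: "j < i" "{L ! j, L ! i} \<in> F"
      using parent i(1) by blast
    then have "L ! j \<in> V" "r (L ! j) < r v"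
      using i r_nth setL by auto
    then show "\<exists>u\<in>V. r u < r v \<and> {u, v} \<in> F"
      using i(2) j(2) by blast
  next
    fix v z
    assume v: "v \<in> V" and z: "z \<in> V" and le: "r v \<le> r z" and Pz: "P {u \<in> V. r u < r v} z"
    obtain i where i: "i < length L" "v = L ! i"
      using V_nth v by blast
    have S: "{u \<in> V. r u < r v} = set (take i L)"
      using before[OF i(1)] r_nth[OF i(1)] i(2) by simp
    have "z \<notin> set (take i L)"
      using le unfolding S[symmetric] by simp
    then have "P (set (take i L)) (L ! i)"
      using greedy[OF i(1), of z] z Pz unfolding S by blast
    then show "P {u \<in> V. r u < r v} v"
      unfolding S by (simp add: i(2))
  qed
qed
context finite_simple_graph
begin

theorem phylogeny_digraph_Eminus_connected:
  assumes conn: "connected_graph V Eminus"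
  obtains W A where "phylogeny_digraph V E W A" "card (W - Inl ` V) + card V = card Tri + card Eminus + 1"
proof -
  obtain root where root: "root \<in> V"
    using conn unfolding connected_graph_def by auto
  have "Eminus \<subseteq> Pow V"
    using Eminus_subset edges_Pow by blast
  moreover have "\<And>v. v \<in> V \<Longrightarrow> (root, v) \<in> (edge_rel Eminus)\<^sup>*"
    using conn root unfolding connected_graph_def by blast
  ultimately obtain r :: "'a \<Rightarrow> nat"
    where r: "\<And>v. v \<in> V \<Longrightarrow> v \<noteq> root \<Longrightarrow> \<exists>u\<in>V. r u < r v \<and> {u, v} \<in> Eminus"
    using greedy_search_ranking[OF finite_V root, of Eminus "\<lambda>_ _. False"] by metis
  have "last_Eminus_edges r v \<noteq> {}" if v: "v \<in> V" "v \<noteq> root" for v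
  proof -
    obtain u where "u \<in> V" "r u < r v" "{u, v} \<in> Eminus"
      using r v by blast
    then have "{u, v} \<in> last_Eminus_edges r v"
      unfolding last_Eminus_edges_def by auto
    then show ?thesis
      by blast
  qed
  then have "uncovered_vertices r root = {}"
    unfolding uncovered_vertices_def by blast
  then show ?thesis
    using phylogeny_digraph_from_ranking[OF root, of r] that by auto
qed

definition completes_triangle :: "'a set \<Rightarrow> 'a \<Rightarrow> bool" where
  "completes_triangle S z \<longleftrightarrow> (\<exists>a\<in>S. \<exists>b\<in>S. a \<noteq> b \<and> {a, b} \<in> E \<and> {a, z} \<in> E \<and> {b, z} \<in> E)"

lemma triangle_one_middle_vertex:
  fixes r :: "'a \<Rightarrow> nat"
  assumes "T \<in> Tri" "v1 \<in> T" "v2 \<in> T" "r v1 < r v2"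
    and "\<exists>u\<in>T. r u < r v1" and "\<exists>w\<in>T. r v2 < r w"
  shows False
proof -
  have ne: "v1 \<noteq> v2"
    using assms(4) by blast
  obtain s where "T = {v1, v2, s}"
    using assms(1-3) ne by (rule triangle_third_vertexE)
  then show False
    using assms(4-6) by auto
qed

end

locale greedy_ranking = diamond_disjoint_graph +
  fixes r :: "'a \<Rightarrow> nat" and root :: 'a
  assumes root: "root \<in> V"
    and inj_r: "inj_on r V"
    and earlier_neighbour: "\<And>v. v \<in> V \<Longrightarrow> v \<noteq> root \<Longrightarrow> \<exists>u\<in>V. r u < r v \<and> {u, v} \<in> E"
    and greedy: "\<And>v z. v \<in> V \<Longrightarrow> z \<in> V \<Longrightarrow> r v \<le> r z \<Longrightarrow>
      completes_triangle {u \<in> V. r u < r v} z \<Longrightarrow> completes_triangle {u \<in> V. r u < r v} v"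
begin

abbreviation "U \<equiv> uncovered_vertices r root"

lemma uncovered_subset: "U \<subseteq> V"
  unfolding uncovered_vertices_def by auto

lemma uncovered_not_completing:
  assumes "v \<in> U"
  shows "\<not> completes_triangle {u \<in> V. r u < r v} v"
proof
  assume "completes_triangle {u \<in> V. r u < r v} v"
  then obtain a b where ab: "r a < r v" "r b < r v" "{a, b} \<in> E" "{a, v} \<in> E" "{b, v} \<in> E"
    unfolding completes_triangle_def by blast
  then have "{a, b, v} \<in> last_triangles r v"
    unfolding last_triangles_def using triangleI by auto
  then show False
    using assms unfolding uncovered_vertices_def by blast
qed

definition middle_triangles :: "'a \<Rightarrow> 'a set set" where
  "middle_triangles v = {T \<in> Tri. v \<in> T \<and> (\<exists>u\<in>T. r u < r v) \<and> (\<exists>w\<in>T. r v < r w)}"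

definition middle_triangle :: "'a \<Rightarrow> 'a set" where
  "middle_triangle v = (SOME T. T \<in> middle_triangles v)"

text \<open>The edge to an earlier neighbour is a triangle edge, and its triangle cannot end at v.\<close>

lemma uncovered_middle_triangle:
  assumes v: "v \<in> U"
  shows "middle_triangle v \<in> middle_triangles v"
proof -
  have vV: "v \<in> V" "v \<noteq> root" and no_last: "last_triangles r v = {}" "last_Eminus_edges r v = {}"
    using v unfolding uncovered_vertices_def by auto
  obtain u where u: "u \<in> V" "r u < r v" "{u, v} \<in> E"
    using earlier_neighbour vV by blast
  have "{u, v} \<notin> last_Eminus_edges r v"
    using no_last by blast
  then have "{u, v} \<in> TE"
    using u unfolding last_Eminus_edges_def minus_edges_def by auto
  then obtain T where T: "T \<in> Tri" "{u, v} \<subseteq> T"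
    unfolding triangle_edges_def by blast
  obtain w where w: "T = {u, v, w}" "w \<noteq> u" "w \<noteq> v"
    using T u(2) by (metis insert_subset less_irrefl triangle_third_vertexE)
  have "T \<notin> last_triangles r v"
    using no_last by blast
  then have "\<not> r w < r v"
    using T w u(2) unfolding last_triangles_def by auto
  moreover have "r w \<noteq> r v"
    using inj_r T w vV triangle_subset by (metis inj_on_contraD insert_subset)
  ultimately have "T \<in> middle_triangles v"
    using T w u(2) unfolding middle_triangles_def by auto
  then show ?thesis
    unfolding middle_triangle_def by (rule someI)
qed

lemma inj_on_middle_triangle: "inj_on middle_triangle U"
proof (rule inj_onI, rule ccontr)
  fix v1 v2
  assume v: "v1 \<in> U" "v2 \<in> U" "middle_triangle v1 = middle_triangle v2" "v1 \<noteq> v2"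
  have "r v1 \<noteq> r v2"
    using inj_on_contraD[OF inj_r v(4)] v(1,2) uncovered_subset by blast
  moreover have "\<not> r v1 < r v2" "\<not> r v2 < r v1"
    using uncovered_middle_triangle[OF v(1)] uncovered_middle_triangle[OF v(2)] v(3)
      triangle_one_middle_vertex[of "middle_triangle v1" v1 v2 r]
      triangle_one_middle_vertex[of "middle_triangle v1" v2 v1 r]
    unfolding middle_triangles_def by auto
  ultimately show False
    by linarith
qed

text \<open>If the middle triangles of uncovered vertices v1 before v2 shared an edge ab,
  then v2 would complete the triangle abv2; the greedy choice rules out that the top
  vertex of the first triangle comes after v2.\<close>

lemma middle_triangles_no_common_edge:
  assumes v: "v1 \<in> U" "v2 \<in> U" "r v1 < r v2"
    and ab: "{a, b} \<subseteq> middle_triangle v1" "{a, b} \<subseteq> middle_triangle v2" "a \<noteq> b"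
  shows False
proof -
  define T1 where "T1 = middle_triangle v1"
  define T2 where "T2 = middle_triangle v2"
  have T1: "T1 \<in> Tri" "v1 \<in> T1" and T2: "T2 \<in> Tri" "v2 \<in> T2"
    using uncovered_middle_triangle[OF v(1)] uncovered_middle_triangle[OF v(2)]
    unfolding T1_def T2_def middle_triangles_def by auto
  obtain u1 w1 where u1: "u1 \<in> T1" "r u1 < r v1" and w1: "w1 \<in> T1" "r v1 < r w1"
    using uncovered_middle_triangle[OF v(1)] unfolding T1_def middle_triangles_def by auto
  have "u1 \<noteq> v1"
    using u1(2) by blast
  then obtain s where s: "T1 = {u1, v1, s}"
    using T1 u1(1) by (metis triangle_third_vertexE)
  then have T1_eq: "T1 = {u1, v1, w1}"
    using w1 u1(2) by auto
  have T1_V: "T1 \<subseteq> V"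
    using T1(1) by (rule triangle_subset)
  have "\<not> r v2 \<le> r w1"
  proof
    assume le: "r v2 \<le> r w1"
    have "u1 \<noteq> w1" "v1 \<noteq> w1"
      using u1(2) w1(2) by auto
    then have "{u1, v1} \<in> E" "{u1, w1} \<in> E" "{v1, w1} \<in> E"
      using triangle_edge[OF T1(1)] T1_eq \<open>u1 \<noteq> v1\<close> by auto
    moreover have "u1 \<in> {u \<in> V. r u < r v2}" "v1 \<in> {u \<in> V. r u < r v2}"
      using T1_V T1_eq u1(2) v(3) by auto
    ultimately have "completes_triangle {u \<in> V. r u < r v2} w1"
      unfolding completes_triangle_def using \<open>u1 \<noteq> v1\<close> by blast
    then have "completes_triangle {u \<in> V. r u < r v2} v2"
      using greedy T1_V w1(1) v(2) uncovered_subset le by blast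
    then show False
      using uncovered_not_completing[OF v(2)] by blast
  qed
  then have "\<forall>y\<in>T1. r y < r v2"
    using T1_eq u1 v(3) by auto
  then have "completes_triangle {u \<in> V. r u < r v2} v2"
    unfolding completes_triangle_def
    using ab T1_V T2 triangle_edge[OF T2(1)] triangle_edge[OF T1(1)]
    unfolding T1_def[symmetric] T2_def[symmetric]
    by (intro bexI[of _ a] bexI[of _ b]) auto
  then show False
    using uncovered_not_completing[OF v(2)] by blast
qed

lemma diamond_triangle_off_middle:
  assumes D: "D \<in> diamonds V E"
  obtains T where "T \<in> Tri" "T \<notin> middle_triangle ` U"
    "\<forall>x\<in>T. \<forall>y\<in>T. x \<noteq> y \<longrightarrow> {x, y} \<in> D"
proof -
  obtain a b c x where Dx: "D = {{a, b}, {a, c}, {b, c}, {a, x}, {b, x}}"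
    "{a, b} \<in> E" "{a, c} \<in> E" "{b, c} \<in> E" "{a, x} \<in> E" "{b, x} \<in> E" "distinct [a, b, c, x]"
    using D by (rule diamond_diagonalE)
  have T: "{a, b, c} \<in> Tri" "{a, b, x} \<in> Tri"
    using triangleI Dx(2-6) by auto
  have "\<forall>p\<in>{a, b, c}. \<forall>q\<in>{a, b, c}. p \<noteq> q \<longrightarrow> {p, q} \<in> D"
    "\<forall>p\<in>{a, b, x}. \<forall>q\<in>{a, b, x}. p \<noteq> q \<longrightarrow> {p, q} \<in> D"
    unfolding Dx(1) by (auto simp: insert_commute)
  moreover have "\<not> ({a, b, c} \<in> middle_triangle ` U \<and> {a, b, x} \<in> middle_triangle ` U)"
  proof
    assume "{a, b, c} \<in> middle_triangle ` U \<and> {a, b, x} \<in> middle_triangle ` U"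
    then obtain v1 v2 where v: "v1 \<in> U" "v2 \<in> U" "middle_triangle v1 = {a, b, c}"
      "middle_triangle v2 = {a, b, x}"
      by blast
    have "{a, b, c} \<noteq> {a, b, x}"
    proof
      assume "{a, b, c} = {a, b, x}"
      then have "x \<in> {a, b, c}"
        by simp
      then show False
        using Dx(7) by auto
    qed
    then have "v1 \<noteq> v2"
      using v(3,4) by auto
    then have "r v1 \<noteq> r v2"
      using inj_on_contraD[OF inj_r] v(1,2) uncovered_subset by blast
    then have "r v1 < r v2 \<or> r v2 < r v1"
      by linarith
    then show False
      using middle_triangles_no_common_edge[of v1 v2 a b] middle_triangles_no_common_edge[of v2 v1 a b]
        v Dx(7) by auto
  qed
  ultimately show ?thesis
    using that T by blast
qed

lemma card_diamonds_uncovered_le: "card (diamonds V E) + card U \<le> card Tri"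
proof -
  define pick where "pick D = (SOME T. T \<in> Tri \<and> T \<notin> middle_triangle ` U \<and>
    (\<forall>x\<in>T. \<forall>y\<in>T. x \<noteq> y \<longrightarrow> {x, y} \<in> D))" for D
  have pick: "pick D \<in> Tri \<and> pick D \<notin> middle_triangle ` U \<and>
      (\<forall>x\<in>pick D. \<forall>y\<in>pick D. x \<noteq> y \<longrightarrow> {x, y} \<in> D)" if D: "D \<in> diamonds V E" for D
  proof -
    obtain T where "T \<in> Tri" "T \<notin> middle_triangle ` U" "\<forall>x\<in>T. \<forall>y\<in>T. x \<noteq> y \<longrightarrow> {x, y} \<in> D"
      using diamond_triangle_off_middle[OF D] .
    then show ?thesis
      unfolding pick_def by (rule someI[where x = T, OF conjI[OF _ conjI]])
  qed
  have "inj_on pick (diamonds V E)"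
  proof (rule inj_onI)
    fix D1 D2
    assume D: "D1 \<in> diamonds V E" "D2 \<in> diamonds V E" "pick D1 = pick D2"
    obtain p q s where "pick D1 = {p, q, s}" "p \<noteq> q"
      using pick[OF D(1)] by (meson triangleE)
    then have "{p, q} \<in> D1" "{p, q} \<in> D2"
      using pick[OF D(1)] pick[OF D(2)] D(3) by auto
    then show "D1 = D2"
      using diamond_eq[OF D(1,2)] by blast
  qed
  then have "card (diamonds V E) \<le> card (Tri - middle_triangle ` U)"
    using pick finite_triangles by (intro card_inj_on_le) auto
  moreover have mid: "middle_triangle ` U \<subseteq> Tri"
    using uncovered_middle_triangle unfolding middle_triangles_def by auto
  moreover have "card (middle_triangle ` U) = card U"
    using card_image[OF inj_on_middle_triangle] .
  ultimately show ?thesis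
    using card_Int_Diff[OF finite_triangles, of "middle_triangle ` U"] by (simp add: Int_absorb1)
qed

theorem phylogeny_digraph_greedy:
  obtains W A where "phylogeny_digraph V E W A"
    "card (W - Inl ` V) + card V + card (diamonds V E) \<le> 2 * card Tri + card Eminus + 1"
proof -
  obtain W A where "phylogeny_digraph V E W A"
    "card (W - Inl ` V) + card V = card Tri + card Eminus + card U + 1"
    by (rule phylogeny_digraph_from_ranking[OF root])
  then show ?thesis
    using that card_diamonds_uncovered_le by fastforce
qed

end

lemma phylogeny_number_le:
  "phylogeny_digraph V E W A \<Longrightarrow> phylogeny_number V E \<le> card (W - Inl ` V)"
  unfolding phylogeny_number_def by (rule Least_le) blast

lemma phylogeny_number_attained:
  assumes "phylogeny_digraph V E W A"
  obtains W' A' where "phylogeny_digraph V E W' A'" "card (W' - Inl ` V) = phylogeny_number V E"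
proof -
  have "\<exists>W A. phylogeny_digraph V E W A \<and> card (W - Inl ` V) = phylogeny_number V E"
    unfolding phylogeny_number_def by (rule LeastI[of _ "card (W - Inl ` V)"]) (use assms in blast)
  then show ?thesis
    using that by blast
qed

context diamond_disjoint_graph
begin

lemma greedy_ranking_exists:
  assumes conn: "connected_graph V E"
  obtains r root where "greedy_ranking V E r root"
proof -
  obtain root where root: "root \<in> V"
    using conn unfolding connected_graph_def by auto
  have reach: "\<And>v. v \<in> V \<Longrightarrow> (root, v) \<in> (edge_rel E)\<^sup>*"
    using conn root unfolding connected_graph_def by blast
  have adj: "\<And>S z. completes_triangle S z \<Longrightarrow> \<exists>a\<in>S. {a, z} \<in> E"
    unfolding completes_triangle_def by blast
  obtain r :: "'a \<Rightarrow> nat" where "inj_on r V"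
    "\<And>v. v \<in> V \<Longrightarrow> v \<noteq> root \<Longrightarrow> \<exists>u\<in>V. r u < r v \<and> {u, v} \<in> E"
    "\<And>v z. v \<in> V \<Longrightarrow> z \<in> V \<Longrightarrow> r v \<le> r z \<Longrightarrow> completes_triangle {u \<in> V. r u < r v} z
      \<Longrightarrow> completes_triangle {u \<in> V. r u < r v} v"
    using greedy_search_ranking[OF finite_V root reach edges_Pow adj] by blast
  then show ?thesis
    using root by (intro that greedy_ranking.intro diamond_disjoint_graph_axioms greedy_ranking_axioms.intro)
qed

lemma phylogeny_number_upper:
  assumes "connected_graph V E"
  shows "phylogeny_number V E + card V + card (diamonds V E) \<le> 2 * card Tri + card Eminus + 1"
proof -
  obtain r root where "greedy_ranking V E r root"
    using greedy_ranking_exists[OF assms] .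
  then obtain W A where "phylogeny_digraph V E W A"
    "card (W - Inl ` V) + card V + card (diamonds V E) \<le> 2 * card Tri + card Eminus + 1"
    by (rule greedy_ranking.phylogeny_digraph_greedy)
  then show ?thesis
    using phylogeny_number_le by fastforce
qed

lemma phylogeny_number_upper_Eminus_connected:
  assumes "connected_graph V Eminus"
  shows "phylogeny_number V E + card V \<le> card Tri + card Eminus + 1"
proof -
  obtain W A where "phylogeny_digraph V E W A" "card (W - Inl ` V) + card V = card Tri + card Eminus + 1"
    using phylogeny_digraph_Eminus_connected[OF assms] .
  then show ?thesis
    using phylogeny_number_le by fastforce
qed

lemma phylogeny_number_lower:
  assumes "connected_graph V E"
  shows "card Eminus + card Tri + 1 \<le> phylogeny_number V E + card V"
    and "card Eminus + num_components V Eminus \<le> phylogeny_number V E + card V"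
proof -
  obtain r root where "greedy_ranking V E r root"
    using greedy_ranking_exists[OF assms] .
  then obtain W0 A0 where "phylogeny_digraph V E W0 A0"
    by (rule greedy_ranking.phylogeny_digraph_greedy)
  then obtain W A where WA: "phylogeny_digraph V E W A" "card (W - Inl ` V) = phylogeny_number V E"
    by (rule phylogeny_number_attained)
  then interpret phylogeny_witness V E W A
    by unfold_locales
  have "V \<noteq> {}"
    using assms unfolding connected_graph_def by simp
  then show "card Eminus + card Tri + 1 \<le> phylogeny_number V E + card V"
    using phylogeny_lower_bound WA(2) by simp
  show "card Eminus + num_components V Eminus \<le> phylogeny_number V E + card V"
    using phylogeny_lower_bound_components WA(2) by simp
qed

end

theorem mainTheorem9:
  fixes V :: "'a set" and E :: "'a set set"
  assumes "simple_graph V E"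
    and "connected_graph V E"
    and "K4_free V E"
    and "\<forall>D1\<in>diamonds V E. \<forall>D2\<in>diamonds V E. D1 \<noteq> D2 \<longrightarrow> D1 \<inter> D2 = {}"
  shows "(int (card E) - int (card V) - 2 * int (num_triangles V E) + int (num_diamonds V E) + 1
           \<le> int (phylogeny_number V E)
         \<and> int (phylogeny_number V E)
           \<le> int (card E) - int (card V) - int (num_triangles V E) + 1)
       \<and> (connected_graph V (minus_edges V E) \<longrightarrow>
           int (phylogeny_number V E) = int (card E) - int (card V) - 2 * int (num_triangles V E)
             + int (num_diamonds V E) + 1)
       \<and> (int (num_components V (minus_edges V E))
              = 2 * int (num_triangles V E) - int (num_diamonds V E) + 1 \<longrightarrow>
           int (phylogeny_number V E) = int (card E) - int (card V) - int (num_triangles V E) + 1)"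
proof -
  interpret diamond_disjoint_graph V E
    using assms(1,3,4) by unfold_locales
  have edges: "card E + card (diamonds V E) = card Eminus + 3 * card Tri"
    by (rule card_edges_triangles_diamonds)
  note lower = phylogeny_number_lower[OF assms(2)]
  note upper = phylogeny_number_upper[OF assms(2)]
  note upper_Eminus = phylogeny_number_upper_Eminus_connected
  show ?thesis
    unfolding num_triangles_def num_diamonds_def
    using edges lower upper upper_Eminus by (intro conjI impI) linarith+
qed

end
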